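(* Let $K$ be a precubical set, $\alpha\in K_0$ and $\epsilon\in\,]0,1[$. Let $\mathcal{G}^-_\alpha(K)$ be the quotient of the homotopy branching space $\mathcal{P}^-_\alpha(K,\epsilon)$ by the equivalence relation $\gamma_1\simeq^-\gamma_2$ if there exists $0<\epsilon'<\epsilon$ such that $\gamma_1\!\restriction_{[0,\epsilon']}=\gamma_2\!\restriction_{[0,\epsilon']}$. Then the map $\mathcal{G}^-_{0_2}(\partial\square[2])\to \mathcal{G}^-_{0_2}(\square[2])$ is not a closed inclusion, and therefore not an r-cofibration for $r\in\{q,m,h\}$.
   Context: ${\mathbf{Top}}$ denotes the category of $\Delta$-generated spaces (or of $\Delta$-Hausdorff $\Delta$-generated spaces), with internal hom $\mathbf{TOP}(-,-)$, equipped with its q-model structure (Quillen), m-model structure (mixed) or h-model structure (Hurewicz/Strøm); r-cofibration means cofibration of the r-model structure. $\square^{op}\mathbf{Set}$ is the category of precubical sets, $\square[n]$ the $n$-cube and $\partial\square[n]$ its boundary (cubes of dimension $\leqslant n-1$). For a precubical set $K$, $|K|_{geom}=\int^{[n]}K_n.[0,1]^n$ is its geometric realization and each $n$-cube $c$ induces $|c|_{geom}:[0,1]^n\to|K|_{geom}$. The initial vertex of an $n$-cube $c$ is $c^-=\partial_1^0\cdots\partial_n^0c$, and $\mathcal{C}^-_\alpha(K)=\{c\in K\mid\dim(c)\geqslant1,\ c^-=\alpha\}$. Let $0_n=(0,\dots,0)$. For $n\geqslant1$, $N_n(\epsilon)$ is the set of natural directed paths $\phi:[0,\epsilon]\to[0,1]^n$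 (non-decreasing in each coordinate, with sum of coordinates equal to $t$ at time $t$), with the $\Delta$-kelleyfication of the relative topology from $\mathbf{TOP}([0,\epsilon],[0,1]^n)$. Then $\mathcal{P}^-_\alpha(K,\epsilon)=\{|c|_{geom}\phi\mid c\in\mathcal{C}^-_\alpha(K),\ \phi\in N_{\dim(c)}(\epsilon)\}$ with the $\Delta$-kelleyfication of the relative topology from $\mathbf{TOP}([0,\epsilon],|K|_{geom})$. *)

theory Defs
  imports "HOL-Analysis.Analysis" "HOL-Homology.Simplices"
begin

text \<open>Quotients, disjoint unions and colimits of Delta-generated spaces are computed
  as in the category of all topological spaces, i.e. by final topologies.\<close>
definition final_open :: "'b set \<Rightarrow> ('a topology \<times> ('a \<Rightarrow> 'b)) set \<Rightarrow> 'b set \<Rightarrow> bool" where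
  "final_open S F U \<longleftrightarrow> U \<subseteq> S \<and> (\<forall>(T, f)\<in>F. openin T {x \<in> topspace T. f x \<in> U})"

definition final_topology :: "'b set \<Rightarrow> ('a topology \<times> ('a \<Rightarrow> 'b)) set \<Rightarrow> 'b topology" where
  "final_topology S F = topology (final_open S F)"

lemma istopology_final: "istopology (final_open S F)"
  unfolding istopology_def
proof (intro conjI allI impI)
  fix U V assume U: "final_open S F U" and V: "final_open S F V"
  show "final_open S F (U \<inter> V)"
    unfolding final_open_def
  proof (intro conjI ballI)
    show "U \<inter> V \<subseteq> S" using U by (auto simp: final_open_def)
  next
    fix p assume p: "p \<in> F"
    obtain T f where pe: "p = (T, f)" by fastforce
    have "openin T ({x \<in> topspace T. f x \<in> U} \<inter> {x \<in> topspace T. f x \<in> V})"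
      using U V p pe by (intro openin_Int) (auto simp: final_open_def)
    moreover have "{x \<in> topspace T. f x \<in> U \<inter> V} =
        {x \<in> topspace T. f x \<in> U} \<inter> {x \<in> topspace T. f x \<in> V}" by blast
    ultimately show "case p of (T, f) \<Rightarrow> openin T {x \<in> topspace T. f x \<in> U \<inter> V}"
      using pe by simp
  qed
next
  fix KK assume K: "\<forall>K\<in>KK. final_open S F K"
  show "final_open S F (\<Union>KK)"
    unfolding final_open_def
  proof (intro conjI ballI)
    show "\<Union>KK \<subseteq> S" using K by (auto simp: final_open_def)
  next
    fix p assume p: "p \<in> F"
    obtain T f where pe: "p = (T, f)" by fastforce
    have "openin T (\<Union>K\<in>KK. {x \<in> topspace T. f x \<in> K})"
      using K p pe by (intro openin_Union) (auto simp: final_open_def)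
    moreover have "{x \<in> topspace T. f x \<in> \<Union>KK} = (\<Union>K\<in>KK. {x \<in> topspace T. f x \<in> K})"
      by blast
    ultimately show "case p of (T, f) \<Rightarrow> openin T {x \<in> topspace T. f x \<in> \<Union>KK}"
      using pe by simp
  qed
qed

lemma openin_final_topology:
  "openin (final_topology S F) U \<longleftrightarrow>
     U \<subseteq> S \<and> (\<forall>(T, f)\<in>F. openin T {x \<in> topspace T. f x \<in> U})"
  unfolding final_topology_def topology_inverse'[OF istopology_final] final_open_def ..

definition quotient_top :: "'a topology \<Rightarrow> 'b set \<Rightarrow> ('a \<Rightarrow> 'b) \<Rightarrow> 'b topology" where
  "quotient_top X S q = final_topology S {(X, q)}"

definition simplex_top :: "nat \<Rightarrow> (nat \<Rightarrow> real) topology" where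
  "simplex_top p = subtopology (powertop_real UNIV) (standard_simplex p)"

definition delta_kelley :: "'a topology \<Rightarrow> 'a topology" where
  "delta_kelley X = final_topology (topspace X)
     {(simplex_top p, f) | p f. continuous_map (simplex_top p) X f}"

definition cmaps :: "'a topology \<Rightarrow> 'b topology \<Rightarrow> ('a \<Rightarrow> 'b) set" where
  "cmaps X Y = {f. continuous_map X Y f \<and> f \<in> extensional (topspace X)}"

definition compact_open :: "'a topology \<Rightarrow> 'b topology \<Rightarrow> ('a \<Rightarrow> 'b) topology" where
  "compact_open X Y = topology_generated_by
     {{f \<in> cmaps X Y. f ` C \<subseteq> U} | C U. compactin X C \<and> openin Y U}"

definition TOP :: "'a topology \<Rightarrow> 'b topology \<Rightarrow> ('a \<Rightarrow> 'b) topology" where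
  "TOP X Y = delta_kelley (compact_open X Y)"

text \<open>A precubical set: sets of n-cubes and face maps \<open>face K i e c\<close> = \<open>\<partial>_i^e c\<close>
  (1 \<le> i \<le> n for an n-cube c; e = False means 0, e = True means 1).\<close>
record 'c precubical =
  cells :: "nat \<Rightarrow> 'c set"
  face  :: "nat \<Rightarrow> bool \<Rightarrow> 'c \<Rightarrow> 'c"

definition precubical_set :: "'c precubical \<Rightarrow> bool" where
  "precubical_set K \<longleftrightarrow>
     (\<forall>n c i e. c \<in> cells K (Suc n) \<and> 1 \<le> i \<and> i \<le> Suc n \<longrightarrow> face K i e c \<in> cells K n) \<and>
     (\<forall>n c i j e e'. c \<in> cells K n \<and> 1 \<le> i \<and> i < j \<and> j \<le> n \<longrightarrow>
        face K i e (face K j e' c) = face K (j - 1) e' (face K i e c))"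

text \<open>The topological cube [0,1]^n, points as functions nat \<Rightarrow> real vanishing from n on
  (coordinate k+1 is stored at index k).\<close>
definition cube :: "nat \<Rightarrow> (nat \<Rightarrow> real) set" where
  "cube n = {x. (\<forall>k<n. 0 \<le> x k \<and> x k \<le> 1) \<and> (\<forall>k\<ge>n. x k = 0)}"

definition cube_top :: "nat \<Rightarrow> (nat \<Rightarrow> real) topology" where
  "cube_top n = subtopology (powertop_real UNIV) (cube n)"

text \<open>Coface map \<open>\<delta>_i^e : [0,1]^n \<rightarrow> [0,1]^(n+1)\<close>, inserting e at coordinate i (1 \<le> i \<le> n+1).\<close>
definition coface :: "nat \<Rightarrow> nat \<Rightarrow> bool \<Rightarrow> (nat \<Rightarrow> real) \<Rightarrow> (nat \<Rightarrow> real)" where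
  "coface n i e x = (\<lambda>k. if k < i - 1 then x k
                          else if k = i - 1 then (if e then 1 else 0)
                          else if k \<le> n then x (k - 1) else 0)"

definition cells_pts :: "'c precubical \<Rightarrow> (nat \<times> 'c \<times> (nat \<Rightarrow> real)) set" where
  "cells_pts K = {(n, c, x). c \<in> cells K n \<and> x \<in> cube n}"

definition real_rel :: "'c precubical \<Rightarrow> (nat \<times> 'c \<times> (nat \<Rightarrow> real)) \<Rightarrow> (nat \<times> 'c \<times> (nat \<Rightarrow> real)) \<Rightarrow> bool" where
  "real_rel K p q \<longleftrightarrow> (\<exists>n c x i e. q = (Suc n, c, coface n i e x) \<and> p = (n, face K i e c, x) \<and>
      c \<in> cells K (Suc n) \<and> x \<in> cube n \<and> 1 \<le> i \<and> i \<le> Suc n)"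

definition real_class :: "'c precubical \<Rightarrow> (nat \<times> 'c \<times> (nat \<Rightarrow> real)) \<Rightarrow> (nat \<times> 'c \<times> (nat \<Rightarrow> real)) set" where
  "real_class K p = {q. equivclp (real_rel K) p q}"

definition real_points :: "'c precubical \<Rightarrow> (nat \<times> 'c \<times> (nat \<Rightarrow> real)) set set" where
  "real_points K = real_class K ` cells_pts K"

definition geom_real :: "'c precubical \<Rightarrow> (nat \<times> 'c \<times> (nat \<Rightarrow> real)) set topology" where
  "geom_real K = final_topology (real_points K)
     {(cube_top n, \<lambda>x. real_class K (n, c, x)) | n c. c \<in> cells K n}"

definition cell_map :: "'c precubical \<Rightarrow> nat \<Rightarrow> 'c \<Rightarrow> (nat \<Rightarrow> real) \<Rightarrow> (nat \<times> 'c \<times> (nat \<Rightarrow> real)) set" where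
  "cell_map K n c x = real_class K (n, c, x)"

definition real_map :: "'c precubical \<Rightarrow> 'd precubical \<Rightarrow> ('c \<Rightarrow> 'd)
     \<Rightarrow> (nat \<times> 'c \<times> (nat \<Rightarrow> real)) set \<Rightarrow> (nat \<times> 'd \<times> (nat \<Rightarrow> real)) set" where
  "real_map K L f p = (let (n, c, x) = (SOME r. r \<in> p) in real_class L (n, f c, x))"

fun init_vertex :: "'c precubical \<Rightarrow> nat \<Rightarrow> 'c \<Rightarrow> 'c" where
  "init_vertex K 0 c = c"
| "init_vertex K (Suc n) c = init_vertex K n (face K (Suc n) False c)"

definition init_cubes :: "'c precubical \<Rightarrow> 'c \<Rightarrow> (nat \<times> 'c) set" where
  "init_cubes K \<alpha> = {(n, c). 1 \<le> n \<and> c \<in> cells K n \<and> init_vertex K n c = \<alpha>}"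

definition natural_paths :: "nat \<Rightarrow> real \<Rightarrow> (real \<Rightarrow> nat \<Rightarrow> real) set" where
  "natural_paths n \<epsilon> = {\<phi> \<in> cmaps (top_of_set {0..\<epsilon>}) (cube_top n).
      (\<forall>s t k. 0 \<le> s \<and> s \<le> t \<and> t \<le> \<epsilon> \<and> k < n \<longrightarrow> \<phi> s k \<le> \<phi> t k) \<and>
      (\<forall>t\<in>{0..\<epsilon>}. (\<Sum>k<n. \<phi> t k) = t)}"

definition branch_paths :: "'c precubical \<Rightarrow> 'c \<Rightarrow> real \<Rightarrow> (real \<Rightarrow> (nat \<times> 'c \<times> (nat \<Rightarrow> real)) set) set" where
  "branch_paths K \<alpha> \<epsilon> = {restrict (cell_map K n c \<circ> \<phi>) {0..\<epsilon>} | n c \<phi>.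
      (n, c) \<in> init_cubes K \<alpha> \<and> \<phi> \<in> natural_paths n \<epsilon>}"

definition branch_space :: "'c precubical \<Rightarrow> 'c \<Rightarrow> real \<Rightarrow> (real \<Rightarrow> (nat \<times> 'c \<times> (nat \<Rightarrow> real)) set) topology" where
  "branch_space K \<alpha> \<epsilon> =
     delta_kelley (subtopology (TOP (top_of_set {0..\<epsilon>}) (geom_real K)) (branch_paths K \<alpha> \<epsilon>))"

definition germ_rel :: "'c precubical \<Rightarrow> 'c \<Rightarrow> real \<Rightarrow> ((real \<Rightarrow> (nat \<times> 'c \<times> (nat \<Rightarrow> real)) set) \<times> (real \<Rightarrow> (nat \<times> 'c \<times> (nat \<Rightarrow> real)) set)) set" where
  "germ_rel K \<alpha> \<epsilon> = {(\<gamma>1, \<gamma>2). \<gamma>1 \<in> branch_paths K \<alpha> \<epsilon> \<and> \<gamma>2 \<in> branch_paths K \<alpha> \<epsilon> \<and>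
      (\<exists>\<epsilon>'. 0 < \<epsilon>' \<and> \<epsilon>' < \<epsilon> \<and> (\<forall>t\<in>{0..\<epsilon>'}. \<gamma>1 t = \<gamma>2 t))}"

definition germ_space :: "'c precubical \<Rightarrow> 'c \<Rightarrow> real \<Rightarrow> (real \<Rightarrow> (nat \<times> 'c \<times> (nat \<Rightarrow> real)) set) set topology" where
  "germ_space K \<alpha> \<epsilon> = quotient_top (branch_space K \<alpha> \<epsilon>)
     (branch_paths K \<alpha> \<epsilon> // germ_rel K \<alpha> \<epsilon>) (\<lambda>\<gamma>. germ_rel K \<alpha> \<epsilon> `` {\<gamma>})"

definition germ_map :: "'c precubical \<Rightarrow> 'd precubical \<Rightarrow> ('c \<Rightarrow> 'd) \<Rightarrow> 'd \<Rightarrow> real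
   \<Rightarrow> (real \<Rightarrow> (nat \<times> 'c \<times> (nat \<Rightarrow> real)) set) set \<Rightarrow> (real \<Rightarrow> (nat \<times> 'd \<times> (nat \<Rightarrow> real)) set) set" where
  "germ_map K L f \<beta> \<epsilon> q =
     germ_rel L \<beta> \<epsilon> `` {restrict (real_map K L f \<circ> (SOME \<gamma>. \<gamma> \<in> q)) {0..\<epsilon>}}"

text \<open>Cubes of \<open>\<square>[n]\<close>: words in {0,1,*}^n (None = *), dimension = number of *;
  \<open>\<partial>_i^e\<close> replaces the i-th * by e.\<close>
fun replace_star :: "nat \<Rightarrow> bool \<Rightarrow> bool option list \<Rightarrow> bool option list" where
  "replace_star i e [] = []"
| "replace_star i e (None # w) =
     (if i = 1 then Some e # w else None # replace_star (i - 1) e w)"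
| "replace_star i e (Some b # w) = Some b # replace_star i e w"

definition std_cube :: "nat \<Rightarrow> bool option list precubical" where
  "std_cube m = \<lparr> cells = (\<lambda>n. {w. length w = m \<and> length (filter (\<lambda>a. a = None) w) = n}),
                  face = replace_star \<rparr>"

definition bdry_cube :: "nat \<Rightarrow> bool option list precubical" where
  "bdry_cube m = \<lparr> cells = (\<lambda>n. if n < m then cells (std_cube m) n else {}),
                   face = replace_star \<rparr>"

definition zero_vertex :: "nat \<Rightarrow> bool option list" where
  "zero_vertex m = replicate m (Some False)"

text \<open>g is a closed inclusion: a homeomorphism of X onto a closed subset of Y,
  the subset carrying the subspace topology of Delta-generated spaces.\<close>
definition closed_inclusion :: "'a topology \<Rightarrow> 'b topology \<Rightarrow> ('a \<Rightarrow> 'b) \<Rightarrow> bool" where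
  "closed_inclusion X Y g \<longleftrightarrow>
     g ` topspace X \<subseteq> topspace Y \<and> closedin Y (g ` topspace X) \<and>
     homeomorphic_map X (delta_kelley (subtopology Y (g ` topspace X))) g"

end

theory Submission
  imports Defs
begin

(* The image of the germ map of the boundary of the square consists of germs of paths that leave
   the corner along one of its two edges. Let p_s be the path of the square that runs along the
   bottom edge up to time s and then diagonally. The family s |-> p_s is continuous into the branch
   space, hence its germs form a continuous path in the germ space. For s > 0 the germ of p_s lies
   in the image, but p_0 is the diagonal, whose points other than the corner have no vanishing
   coordinate, so its germ does not. Hence the image is not closed. *)

section \<open>Final topologies, Delta-kelleyfication and the compact-open topology\<close>

lemma topspace_final_topology:
  assumes "\<And>T f. (T, f) \<in> F \<Longrightarrow> f ` topspace T \<subseteq> S"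
  shows "topspace (final_topology S F) = S"
proof -
  have "openin (final_topology S F) S"
    unfolding openin_final_topology
  proof (intro conjI ballI; clarify?)
    fix T f assume "(T, f) \<in> F"
    then have "{x \<in> topspace T. f x \<in> S} = topspace T" using assms by blast
    then show "openin T {x \<in> topspace T. f x \<in> S}" by simp
  qed
  then show ?thesis
    by (metis openin_final_topology openin_subset openin_topspace subset_antisym)
qed

lemma continuous_map_final_topology:
  assumes "\<And>T f. (T, f) \<in> F \<Longrightarrow> f ` topspace T \<subseteq> S" and "(T, f) \<in> F"
  shows "continuous_map T (final_topology S F) f"
proof -
  have "topspace (final_topology S F) = S" using assms(1) by (rule topspace_final_topology)
  then show ?thesis unfolding continuous_map using assms by (auto simp: openin_final_topology)
qed

lemma topspace_delta_kelley [simp]: "topspace (delta_kelley X) = topspace X"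
  unfolding delta_kelley_def
  by (rule topspace_final_topology) (auto dest: continuous_map_image_subset_topspace)

text \<open>The unit interval is homeomorphic to the 1-simplex, via \<open>s \<mapsto> (1 - s, s)\<close> and
  \<open>x \<mapsto> x 1\<close>, so its paths are among the maps tested by Delta-kelleyfication.\<close>
lemma continuous_map_interval_delta_kelley:
  fixes f :: "real \<Rightarrow> 'a"
  assumes f: "continuous_map (top_of_set {0..1}) X f"
  shows "continuous_map (top_of_set {0..1}) (delta_kelley X) f"
proof -
  define h :: "real \<Rightarrow> nat \<Rightarrow> real" where
    "h s = (\<lambda>k. if k = 0 then 1 - s else if k = 1 then s else 0)" for s
  have h: "continuous_map (top_of_set {0..1}) (simplex_top 1) h"
    unfolding simplex_top_def
  proof (rule continuous_map_into_subtopology)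
    show "continuous_map (top_of_set {0..1}) (powertop_real UNIV) h"
      unfolding continuous_map_componentwise_UNIV
    proof
      fix k :: nat
      show "continuous_map (top_of_set {0..1}) euclideanreal (\<lambda>s. h s k)"
        unfolding h_def continuous_map_iff_continuous
        by (cases "k = 0"; cases "k = 1"; simp; intro continuous_intros)
    qed
    show "h \<in> topspace (top_of_set {0..1}) \<rightarrow> standard_simplex 1"
      by (auto simp: h_def standard_simplex_def)
  qed
  have "continuous_map (simplex_top 1) (top_of_set {0..1}) (\<lambda>x. x 1)"
    unfolding simplex_top_def continuous_map_in_subtopology
    by (auto simp: standard_simplex_def
        intro!: continuous_map_from_subtopology continuous_map_product_projection)
  then have fx: "continuous_map (simplex_top 1) X (\<lambda>x. f (x 1))"
    using continuous_map_compose[OF _ f] by (simp add: o_def)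
  show ?thesis
    unfolding continuous_map topspace_delta_kelley
  proof (intro conjI allI impI)
    show "f ` topspace (top_of_set {0..1}) \<subseteq> topspace X"
      using f by (rule continuous_map_image_subset_topspace)
    fix U assume "openin (delta_kelley X) U"
    then have "openin (simplex_top 1) {x \<in> topspace (simplex_top 1). f (x 1) \<in> U}"
      using fx unfolding delta_kelley_def openin_final_topology by fastforce
    then have "openin (top_of_set {0..1})
        {s \<in> topspace (top_of_set {0..1}). h s \<in> {x \<in> topspace (simplex_top 1). f (x 1) \<in> U}}"
      using h unfolding continuous_map by blast
    moreover have "h s \<in> topspace (simplex_top 1)" if "s \<in> {0..1}" for s
      using continuous_map_image_subset_topspace[OF h] that by auto
    then have "{s \<in> topspace (top_of_set {0..1}). h s \<in> {x \<in> topspace (simplex_top 1). f (x 1) \<in> U}}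
        = {s \<in> topspace (top_of_set {0..1}). f s \<in> U}"
      by (auto simp: h_def)
    ultimately show "openin (top_of_set {0..1}) {s \<in> topspace (top_of_set {0..1}). f s \<in> U}"
      by simp
  qed
qed

lemma topspace_compact_open [simp]: "topspace (compact_open X Y) = cmaps X Y"
proof -
  have "cmaps X Y \<in> {{f \<in> cmaps X Y. f ` C \<subseteq> U} | C U. compactin X C \<and> openin Y U}"
    by (rule CollectI, rule exI[of _ "{}"], rule exI[of _ "topspace Y"]) auto
  then show ?thesis unfolding compact_open_def topology_generated_by_topspace by blast
qed

lemma continuous_map_compact_open:
  assumes "f ` topspace Z \<subseteq> cmaps X Y"
    and "\<And>C U. compactin X C \<Longrightarrow> openin Y U \<Longrightarrow> openin Z {z \<in> topspace Z. f z ` C \<subseteq> U}"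
  shows "continuous_map Z (compact_open X Y) f"
  unfolding continuous_map topspace_compact_open
proof (intro conjI allI impI)
  show "f ` topspace Z \<subseteq> cmaps X Y" by fact
  fix V assume "openin (compact_open X Y) V"
  then have "generate_topology_on {{f \<in> cmaps X Y. f ` C \<subseteq> U} | C U. compactin X C \<and> openin Y U} V"
    unfolding compact_open_def by (rule openin_topology_generated_by)
  then show "openin Z {x \<in> topspace Z. f x \<in> V}"
  proof induction
    case Empty
    then show ?case by simp
  next
    case (Int a b)
    have "{x \<in> topspace Z. f x \<in> a \<inter> b} = {x \<in> topspace Z. f x \<in> a} \<inter> {x \<in> topspace Z. f x \<in> b}"
      by blast
    then show ?case using Int by (simp add: openin_Int)
  next
    case (UN K)
    have "{x \<in> topspace Z. f x \<in> \<Union>K} = (\<Union>k\<in>K. {x \<in> topspace Z. f x \<in> k})" by blast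
    then show ?case using UN by (auto intro!: openin_Union)
  next
    case (Basis s)
    then obtain C U where s: "s = {g \<in> cmaps X Y. g ` C \<subseteq> U}" "compactin X C" "openin Y U"
      by blast
    have "{x \<in> topspace Z. f x \<in> s} = {z \<in> topspace Z. f z ` C \<subseteq> U}"
      using assms(1) s(1) by blast
    then show ?case using assms(2) s by simp
  qed
qed

lemma continuous_map_compact_open_curry:
  assumes G: "continuous_map (prod_topology X Y) Z G"
  shows "continuous_map X (compact_open Y Z) (\<lambda>x. restrict (\<lambda>y. G (x, y)) (topspace Y))"
proof (rule continuous_map_compact_open)
  have "continuous_map Y Z (\<lambda>y. G (x, y))" if "x \<in> topspace X" for x
    using continuous_map_compose[OF _ G, of Y "\<lambda>y. (x, y)"] that
    by (simp add: o_def continuous_map_pairedI)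
  then show "(\<lambda>x. restrict (\<lambda>y. G (x, y)) (topspace Y)) ` topspace X \<subseteq> cmaps Y Z"
    unfolding cmaps_def by (auto intro: continuous_map_eq[where f = "\<lambda>y. G (_, y)"])
next
  fix C U assume C: "compactin Y C" and U: "openin Z U"
  have W: "openin (prod_topology X Y) {p \<in> topspace (prod_topology X Y). G p \<in> U}"
    using G U unfolding continuous_map by blast
  have CY: "C \<subseteq> topspace Y" using C by (rule compactin_subset_topspace)
  show "openin X {x \<in> topspace X. restrict (\<lambda>y. G (x, y)) (topspace Y) ` C \<subseteq> U}"
  proof (subst openin_subopen, intro ballI)
    fix x0 assume x0: "x0 \<in> {x \<in> topspace X. restrict (\<lambda>y. G (x, y)) (topspace Y) ` C \<subseteq> U}"
    then have x0X: "x0 \<in> topspace X" and "\<And>y. y \<in> C \<Longrightarrow> G (x0, y) \<in> U"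
      using CY by (auto simp: image_subset_iff)
    then have "{x0} \<times> C \<subseteq> {p \<in> topspace (prod_topology X Y). G p \<in> U}"
      using CY by (auto simp: topspace_prod_topology)
    then obtain V V' where V: "openin X V" "x0 \<in> V" and "openin Y V'" "C \<subseteq> V'"
        and VV': "V \<times> V' \<subseteq> {p \<in> topspace (prod_topology X Y). G p \<in> U}"
      using tube_lemma_right[OF W C x0X] by blast
    have "V \<subseteq> {x \<in> topspace X. restrict (\<lambda>y. G (x, y)) (topspace Y) ` C \<subseteq> U}"
      using VV' \<open>C \<subseteq> V'\<close> openin_subset[OF V(1)] CY by fastforce
    with V show "\<exists>T. openin X T \<and> x0 \<in> T \<and>
        T \<subseteq> {x \<in> topspace X. restrict (\<lambda>y. G (x, y)) (topspace Y) ` C \<subseteq> U}"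
      by (intro exI[of _ V] conjI)
  qed
qed

lemma continuous_map_cell_map:
  assumes "c \<in> cells K n"
  shows "continuous_map (cube_top n) (geom_real K) (cell_map K n c)"
  unfolding geom_real_def cell_map_def
  by (rule continuous_map_final_topology)
    (use assms in \<open>auto simp: real_points_def cells_pts_def cube_top_def\<close>)

lemma continuous_map_into_cube_top:
  assumes "\<And>k. continuous_on S (\<lambda>x. f x k)" and "f ` S \<subseteq> cube n"
  shows "continuous_map (top_of_set S) (cube_top n) f"
  unfolding cube_top_def using assms
  by (auto intro!: continuous_map_into_subtopology
      simp: continuous_map_componentwise_UNIV continuous_map_iff_continuous)

lemma natural_pathsI:
  assumes "\<And>k. continuous_on {0..\<epsilon>} (\<lambda>t. \<phi> t k)" and "\<phi> ` {0..\<epsilon>} \<subseteq> cube n"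
    and "\<And>s t k. 0 \<le> s \<Longrightarrow> s \<le> t \<Longrightarrow> t \<le> \<epsilon> \<Longrightarrow> k < n \<Longrightarrow> \<phi> s k \<le> \<phi> t k"
    and "\<And>t. t \<in> {0..\<epsilon>} \<Longrightarrow> (\<Sum>k<n. \<phi> t k) = t"
  shows "restrict \<phi> {0..\<epsilon>} \<in> natural_paths n \<epsilon>"
proof -
  have "continuous_map (top_of_set {0..\<epsilon>}) (cube_top n) (restrict \<phi> {0..\<epsilon>})"
    using continuous_map_into_cube_top[OF assms(1,2)] by (rule continuous_map_eq) simp
  then show ?thesis
    unfolding natural_paths_def cmaps_def using assms(3,4) by auto
qed

lemma continuous_map_into_branch_space:
  fixes f :: "real \<Rightarrow> real \<Rightarrow> (nat \<times> 'c \<times> (nat \<Rightarrow> real)) set"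
  assumes "continuous_map (top_of_set {0..1}) (compact_open (top_of_set {0..\<epsilon>}) (geom_real K)) f"
    and "f ` {0..1} \<subseteq> branch_paths K \<alpha> \<epsilon>"
  shows "continuous_map (top_of_set {0..1}) (branch_space K \<alpha> \<epsilon>) f"
proof -
  have "continuous_map (top_of_set {0..1}) (TOP (top_of_set {0..\<epsilon>}) (geom_real K)) f"
    unfolding TOP_def using assms(1) by (rule continuous_map_interval_delta_kelley)
  then have "continuous_map (top_of_set {0..1})
      (subtopology (TOP (top_of_set {0..\<epsilon>}) (geom_real K)) (branch_paths K \<alpha> \<epsilon>)) f"
    using assms(2) by (simp add: continuous_map_in_subtopology image_subset_iff_funcset)
  then show ?thesis
    unfolding branch_space_def by (rule continuous_map_interval_delta_kelley)
qed

lemma equiv_germ_rel: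
  assumes "0 < \<epsilon>"
  shows "equiv (branch_paths K \<alpha> \<epsilon>) (germ_rel K \<alpha> \<epsilon>)"
proof (rule equivI)
  show "germ_rel K \<alpha> \<epsilon> \<subseteq> branch_paths K \<alpha> \<epsilon> \<times> branch_paths K \<alpha> \<epsilon>"
    by (auto simp: germ_rel_def)
  show "refl_on (branch_paths K \<alpha> \<epsilon>) (germ_rel K \<alpha> \<epsilon>)"
    unfolding refl_on_def germ_rel_def using assms by (auto intro!: exI[of _ "\<epsilon> / 2"])
  show "sym (germ_rel K \<alpha> \<epsilon>)"
    unfolding sym_def germ_rel_def by auto
  show "trans (germ_rel K \<alpha> \<epsilon>)"
  proof (rule transI)
    fix \<gamma>1 \<gamma>2 \<gamma>3
    assume "(\<gamma>1, \<gamma>2) \<in> germ_rel K \<alpha> \<epsilon>" "(\<gamma>2, \<gamma>3) \<in> germ_rel K \<alpha> \<epsilon>"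
    then obtain e1 e2 where "0 < e1" "e1 < \<epsilon>" "\<forall>t\<in>{0..e1}. \<gamma>1 t = \<gamma>2 t"
      and "0 < e2" "e2 < \<epsilon>" "\<forall>t\<in>{0..e2}. \<gamma>2 t = \<gamma>3 t"
      and "\<gamma>1 \<in> branch_paths K \<alpha> \<epsilon>" "\<gamma>3 \<in> branch_paths K \<alpha> \<epsilon>"
      unfolding germ_rel_def by blast
    then show "(\<gamma>1, \<gamma>3) \<in> germ_rel K \<alpha> \<epsilon>"
      unfolding germ_rel_def by (auto intro!: exI[of _ "min e1 e2"])
  qed
qed

lemma germ_rel_iff:
  "(\<gamma>1, \<gamma>2) \<in> germ_rel K \<alpha> \<epsilon> \<longleftrightarrow>
     \<gamma>1 \<in> branch_paths K \<alpha> \<epsilon> \<and> \<gamma>2 \<in> branch_paths K \<alpha> \<epsilon> \<and>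
     (\<exists>e. 0 < e \<and> e < \<epsilon> \<and> (\<forall>t\<in>{0..e}. \<gamma>1 t = \<gamma>2 t))"
  unfolding germ_rel_def by simp

lemma topspace_germ_space:
  "topspace (germ_space K \<alpha> \<epsilon>) = branch_paths K \<alpha> \<epsilon> // germ_rel K \<alpha> \<epsilon>"
  unfolding germ_space_def quotient_top_def
  by (rule topspace_final_topology) (auto simp: branch_space_def intro!: quotientI)

lemma continuous_map_germ_class:
  "continuous_map (branch_space K \<alpha> \<epsilon>) (germ_space K \<alpha> \<epsilon>) (\<lambda>\<gamma>. germ_rel K \<alpha> \<epsilon> `` {\<gamma>})"
  unfolding germ_space_def quotient_top_def
  by (rule continuous_map_final_topology) (auto simp: branch_space_def intro!: quotientI)

lemma real_class_eq_iff: "real_class K p = real_class K q \<longleftrightarrow> equivclp (real_rel K) p q"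
proof
  assume eq: "real_class K p = real_class K q"
  have "q \<in> real_class K p"
    unfolding eq by (simp add: real_class_def)
  then show "equivclp (real_rel K) p q" by (simp add: real_class_def)
next
  assume "equivclp (real_rel K) p q"
  then show "real_class K p = real_class K q"
    unfolding real_class_def by (blast intro: equivclp_trans equivclp_sym)
qed

lemma real_rel_bdry_cube: "real_rel (bdry_cube m) p q \<Longrightarrow> real_rel (std_cube m) p q"
  unfolding real_rel_def bdry_cube_def std_cube_def by (simp split: if_splits) blast

lemma equivclp_real_rel_bdry_cube:
  "equivclp (real_rel (bdry_cube m)) p q \<Longrightarrow> equivclp (real_rel (std_cube m)) p q"
proof (induction rule: equivclp_induct)
  case (step y z)
  then show ?case by (metis equivclp_into_equivclp real_rel_bdry_cube)
qed simp

lemma real_map_bdry_cube_real_class: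
  "real_map (bdry_cube m) (std_cube m) id (real_class (bdry_cube m) p) = real_class (std_cube m) p"
proof -
  obtain n c x where r: "(SOME r. r \<in> real_class (bdry_cube m) p) = (n, c, x)"
    by (metis prod_cases3)
  have "p \<in> real_class (bdry_cube m) p" by (simp add: real_class_def)
  then have "(SOME r. r \<in> real_class (bdry_cube m) p) \<in> real_class (bdry_cube m) p" by (rule someI)
  then have "equivclp (real_rel (bdry_cube m)) p (n, c, x)"
    using r by (simp add: real_class_def)
  then have "equivclp (real_rel (std_cube m)) (n, c, x) p"
    by (rule equivclp_sym[OF equivclp_real_rel_bdry_cube])
  then show ?thesis unfolding real_map_def r by (simp add: real_class_eq_iff)
qed

lemma init_cubes_bdry_cube_subset: "init_cubes (bdry_cube m) \<alpha> \<subseteq> init_cubes (std_cube m) \<alpha>"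
proof -
  have "init_vertex (bdry_cube m) n c = init_vertex (std_cube m) n c" for n c
    by (induction n arbitrary: c) (simp_all add: bdry_cube_def std_cube_def)
  then show ?thesis
    unfolding init_cubes_def by (auto simp: bdry_cube_def std_cube_def split: if_splits)
qed

definition bdry_incl_path :: "nat \<Rightarrow> real \<Rightarrow> (real \<Rightarrow> (nat \<times> bool option list \<times> (nat \<Rightarrow> real)) set)
    \<Rightarrow> real \<Rightarrow> (nat \<times> bool option list \<times> (nat \<Rightarrow> real)) set" where
  "bdry_incl_path m \<epsilon> \<gamma> = restrict (real_map (bdry_cube m) (std_cube m) id \<circ> \<gamma>) {0..\<epsilon>}"

lemma bdry_incl_path_in_branch_paths:
  assumes "\<gamma> \<in> branch_paths (bdry_cube m) \<alpha> \<epsilon>"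
  shows "bdry_incl_path m \<epsilon> \<gamma> \<in> branch_paths (std_cube m) \<alpha> \<epsilon>"
proof -
  obtain n c \<phi> where c: "(n, c) \<in> init_cubes (bdry_cube m) \<alpha>" "\<phi> \<in> natural_paths n \<epsilon>"
    and \<gamma>: "\<gamma> = restrict (cell_map (bdry_cube m) n c \<circ> \<phi>) {0..\<epsilon>}"
    using assms unfolding branch_paths_def by blast
  have "bdry_incl_path m \<epsilon> \<gamma> = restrict (cell_map (std_cube m) n c \<circ> \<phi>) {0..\<epsilon>}"
    unfolding bdry_incl_path_def \<gamma>
    by (rule ext) (simp add: cell_map_def real_map_bdry_cube_real_class)
  moreover have "(n, c) \<in> init_cubes (std_cube m) \<alpha>"
    using c(1) init_cubes_bdry_cube_subset by blast
  ultimately show ?thesis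
    using c(2) unfolding branch_paths_def by blast
qed

lemma germ_map_bdry_cube_class:
  assumes "0 < \<epsilon>" and \<gamma>: "\<gamma> \<in> branch_paths (bdry_cube m) \<alpha> \<epsilon>"
  shows "germ_map (bdry_cube m) (std_cube m) id \<alpha> \<epsilon> (germ_rel (bdry_cube m) \<alpha> \<epsilon> `` {\<gamma>})
    = germ_rel (std_cube m) \<alpha> \<epsilon> `` {bdry_incl_path m \<epsilon> \<gamma>}"
proof -
  define \<gamma>' where "\<gamma>' = (SOME \<gamma>'. \<gamma>' \<in> germ_rel (bdry_cube m) \<alpha> \<epsilon> `` {\<gamma>})"
  have "\<gamma> \<in> germ_rel (bdry_cube m) \<alpha> \<epsilon> `` {\<gamma>}"
    using equiv_class_self[OF equiv_germ_rel[OF assms(1)] \<gamma>] .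
  then have "\<gamma>' \<in> germ_rel (bdry_cube m) \<alpha> \<epsilon> `` {\<gamma>}"
    unfolding \<gamma>'_def by (rule someI[where P = "\<lambda>\<gamma>'. \<gamma>' \<in> germ_rel (bdry_cube m) \<alpha> \<epsilon> `` {\<gamma>}"])
  then obtain e where e: "0 < e" "e < \<epsilon>" "\<forall>t\<in>{0..e}. \<gamma> t = \<gamma>' t"
    and \<gamma>': "\<gamma>' \<in> branch_paths (bdry_cube m) \<alpha> \<epsilon>"
    unfolding Image_singleton_iff germ_rel_iff by blast
  have "\<forall>t\<in>{0..e}. bdry_incl_path m \<epsilon> \<gamma>' t = bdry_incl_path m \<epsilon> \<gamma> t"
    using e by (auto simp: bdry_incl_path_def)
  then have "(bdry_incl_path m \<epsilon> \<gamma>', bdry_incl_path m \<epsilon> \<gamma>) \<in> germ_rel (std_cube m) \<alpha> \<epsilon>"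
    unfolding germ_rel_iff using e(1,2) \<gamma> \<gamma>' bdry_incl_path_in_branch_paths by blast
  then show ?thesis
    unfolding germ_map_def \<gamma>'_def[symmetric] bdry_incl_path_def[symmetric]
    by (rule equiv_class_eq[OF equiv_germ_rel[OF assms(1)]])
qed

lemma germ_map_bdry_cube_image:
  assumes "0 < \<epsilon>"
  shows "germ_map (bdry_cube m) (std_cube m) id \<alpha> \<epsilon> `
           (branch_paths (bdry_cube m) \<alpha> \<epsilon> // germ_rel (bdry_cube m) \<alpha> \<epsilon>)
       = (\<lambda>\<gamma>. germ_rel (std_cube m) \<alpha> \<epsilon> `` {bdry_incl_path m \<epsilon> \<gamma>}) ` branch_paths (bdry_cube m) \<alpha> \<epsilon>"
proof -
  have quotient_eq: "branch_paths (bdry_cube m) \<alpha> \<epsilon> // germ_rel (bdry_cube m) \<alpha> \<epsilon>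
      = (\<lambda>\<gamma>. germ_rel (bdry_cube m) \<alpha> \<epsilon> `` {\<gamma>}) ` branch_paths (bdry_cube m) \<alpha> \<epsilon>"
    unfolding quotient_def by (rule UNION_singleton_eq_range)
  show ?thesis
    unfolding quotient_eq image_image by (rule image_cong[OF refl germ_map_bdry_cube_class[OF assms]])
qed

section \<open>Coordinates on the realization of a standard cube\<close>

lemma length_replace_star [simp]: "length (replace_star i e w) = length w"
  by (induction i e w rule: replace_star.induct) auto

text \<open>A point \<open>(n, w, x)\<close> of the realization of \<open>\<square>[m]\<close> lies on the face \<open>w \<in> {0,1,*}^m\<close> of
  \<open>[0,1]^m\<close>; its free coordinates, at the positions of the stars of \<open>w\<close>, are \<open>x 0, \<dots>, x (n - 1)\<close>.\<close>
definition word_coord :: "bool option list \<Rightarrow> (nat \<Rightarrow> real) \<Rightarrow> nat \<Rightarrow> real" where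
  "word_coord w x j = (case w ! j of Some b \<Rightarrow> (if b then 1 else 0)
                        | None \<Rightarrow> x (length (filter (\<lambda>a. a = None) (take j w))))"

definition std_cube_coord :: "nat \<times> bool option list \<times> (nat \<Rightarrow> real) \<Rightarrow> nat \<Rightarrow> real" where
  "std_cube_coord p j = (case p of (n, w, x) \<Rightarrow> if j < length w then word_coord w x j else 0)"

lemma word_coord_Cons_0:
  "word_coord (a # w) x 0 = (case a of Some b \<Rightarrow> (if b then 1 else 0) | None \<Rightarrow> x 0)"
  by (simp add: word_coord_def split: option.split)

lemma word_coord_Some_Suc: "word_coord (Some b # w) x (Suc j) = word_coord w x j"
  by (simp add: word_coord_def split: option.split)

lemma word_coord_None_Suc: "word_coord (None # w) x (Suc j) = word_coord w (\<lambda>k. x (Suc k)) j"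
  by (simp add: word_coord_def split: option.split)

lemma word_coord_cong:
  assumes "j < length w" and "\<And>k. k < length (filter (\<lambda>a. a = None) w) \<Longrightarrow> x k = y k"
  shows "word_coord w x j = word_coord w y j"
proof (cases "w ! j")
  case None
  have "take (Suc j) w = take j w @ [None]"
    using assms(1) None by (simp add: take_Suc_conv_app_nth)
  moreover have "length (filter (\<lambda>a. a = None) w)
      = length (filter (\<lambda>a. a = None) (take (Suc j) w)) + length (filter (\<lambda>a. a = None) (drop (Suc j) w))"
    by (metis append_take_drop_id filter_append length_append)
  ultimately have "length (filter (\<lambda>a. a = None) (take j w)) < length (filter (\<lambda>a. a = None) w)"
    by simp
  then show ?thesis using None assms(2) by (simp add: word_coord_def)
qed (simp add: word_coord_def)

lemma coface_Suc:
  "2 \<le> i \<Longrightarrow> coface (Suc n) i e x (Suc k) = coface n (i - 1) e (\<lambda>k. x (Suc k)) k"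
  by (auto simp: coface_def)

lemma word_coord_replace_first_star:
  assumes "length (filter (\<lambda>a. a = None) c) = n" and "j \<le> length c"
  shows "word_coord (Some e # c) x j = word_coord (None # c) (coface n 1 e x) j"
proof (cases j)
  case 0
  then show ?thesis by (simp add: word_coord_Cons_0 coface_def)
next
  case (Suc j')
  have "word_coord c x j' = word_coord c (\<lambda>k. coface n 1 e x (Suc k)) j'"
    using assms Suc by (intro word_coord_cong) (auto simp: coface_def)
  then show ?thesis using Suc by (simp add: word_coord_Some_Suc word_coord_None_Suc)
qed

lemma word_coord_replace_star:
  assumes "length (filter (\<lambda>a. a = None) c) = Suc n" and "1 \<le> i" "i \<le> Suc n" and "j < length c"
  shows "word_coord (replace_star i e c) x j = word_coord c (coface n i e x) j"
  using assms
proof (induction c arbitrary: n i j x)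
  case Nil
  then show ?case by simp
next
  case (Cons a c)
  show ?case
  proof (cases a)
    case (Some b)
    with Cons show ?thesis
      by (cases j) (simp_all add: word_coord_Cons_0 word_coord_Some_Suc)
  next
    case None
    show ?thesis
    proof (cases "i = 1")
      case True
      then show ?thesis
        using None Cons.prems(1,4) word_coord_replace_first_star[of c n j e x] by simp
    next
      case False
      then obtain n' where n: "n = Suc n'" and i: "2 \<le> i"
        using Cons.prems(2,3) by (cases n) auto
      show ?thesis
      proof (cases j)
        case 0
        then show ?thesis using None i by (simp add: word_coord_Cons_0 coface_def)
      next
        case (Suc j')
        have "word_coord (replace_star (i - 1) e c) (\<lambda>k. x (Suc k)) j'
            = word_coord c (coface n' (i - 1) e (\<lambda>k. x (Suc k))) j'"
          using Cons.prems None n i Suc by (intro Cons.IH) auto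
        then show ?thesis using None i n Suc by (simp add: word_coord_None_Suc coface_Suc)
      qed
    qed
  qed
qed

lemma real_rel_std_cube_coord:
  assumes "real_rel (std_cube m) p q"
  shows "std_cube_coord p = std_cube_coord q"
proof
  fix j
  obtain n c x i e where q: "q = (Suc n, c, coface n i e x)" and "p = (n, face (std_cube m) i e c, x)"
    and "c \<in> cells (std_cube m) (Suc n)" and i: "1 \<le> i" "i \<le> Suc n"
    using assms unfolding real_rel_def by blast
  then have p: "p = (n, replace_star i e c, x)" and c: "length (filter (\<lambda>a. a = None) c) = Suc n"
    by (simp_all add: std_cube_def)
  show "std_cube_coord p j = std_cube_coord q j"
    unfolding p q std_cube_coord_def using c i by (simp add: word_coord_replace_star)
qed

lemma real_class_std_cube_coord:
  assumes "real_class (std_cube m) p = real_class (std_cube m) q"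
  shows "std_cube_coord p = std_cube_coord q"
proof -
  have "equivclp (real_rel (std_cube m)) p q"
    using assms by (simp add: real_class_eq_iff)
  then show ?thesis
  proof (induction rule: equivclp_induct)
    case (step y z)
    from step.hyps(2) have "std_cube_coord y = std_cube_coord z"
      by (auto dest: real_rel_std_cube_coord)
    with step.IH show ?case by simp
  qed simp
qed

section \<open>Paths leaving the corner of the square\<close>

lemma init_cubes_bdry_square:
  "(n, c) \<in> init_cubes (bdry_cube 2) (zero_vertex 2) \<longleftrightarrow>
     n = 1 \<and> (c = [None, Some False] \<or> c = [Some False, None])"
proof
  assume c: "(n, c) \<in> init_cubes (bdry_cube 2) (zero_vertex 2)"
  then have n: "n = 1" and "length c = 2"
    by (auto simp: init_cubes_def bdry_cube_def std_cube_def split: if_splits)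
  then obtain a b where ab: "c = [a, b]"
    by (auto simp: numeral_2_eq_2 length_Suc_conv)
  show "n = 1 \<and> (c = [None, Some False] \<or> c = [Some False, None])"
    using c unfolding n ab
    by (cases a; cases b)
      (auto simp: init_cubes_def bdry_cube_def std_cube_def zero_vertex_def numeral_2_eq_2)
next
  assume "n = 1 \<and> (c = [None, Some False] \<or> c = [Some False, None])"
  then show "(n, c) \<in> init_cubes (bdry_cube 2) (zero_vertex 2)"
    by (auto simp: init_cubes_def bdry_cube_def std_cube_def zero_vertex_def numeral_2_eq_2)
qed

lemma cell_map_bottom_edge_eq_square:
  assumes "y \<in> cube 1"
  shows "cell_map (std_cube 2) 1 [None, Some False] y = cell_map (std_cube 2) 2 [None, None] y"
proof -
  have "coface 1 2 False y = y"
    using assms by (auto simp: coface_def cube_def)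
  moreover have "real_rel (std_cube 2) (1, face (std_cube 2) 2 False [None, None], y)
      (2, [None, None], coface 1 2 False y)"
    unfolding real_rel_def using assms
    by (intro exI[of _ 1] exI[of _ "[None, None]"] exI[of _ y] exI[of _ 2] exI[of _ False])
      (simp add: std_cube_def)
  ultimately show ?thesis
    unfolding cell_map_def real_class_eq_iff
    by (simp add: std_cube_def numeral_2_eq_2 r_into_equivclp)
qed

text \<open>Up to time \<open>s\<close> this path runs along the bottom edge \<open>[*, 0]\<close> of the square, afterwards
  it moves diagonally; for \<open>s = 0\<close> it is the diagonal.\<close>
definition delayed_diagonal :: "real \<Rightarrow> real \<Rightarrow> nat \<Rightarrow> real" where
  "delayed_diagonal s t =
     (\<lambda>k. if k = 0 then (t + min t s) / 2 else if k = 1 then (t - min t s) / 2 else 0)"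

definition delayed_diagonal_path :: "real \<Rightarrow> real \<Rightarrow> real \<Rightarrow> (nat \<times> bool option list \<times> (nat \<Rightarrow> real)) set"
  where "delayed_diagonal_path \<epsilon> s =
     restrict (\<lambda>t. cell_map (std_cube 2) 2 [None, None] (delayed_diagonal s t)) {0..\<epsilon>}"

lemma delayed_diagonal_in_cube: "0 \<le> s \<Longrightarrow> 0 \<le> t \<Longrightarrow> t \<le> 1 \<Longrightarrow> delayed_diagonal s t \<in> cube 2"
  by (auto simp: delayed_diagonal_def cube_def min_def)

lemma continuous_on_delayed_diagonal:
  "continuous_on S (\<lambda>p. delayed_diagonal (fst p) (snd p) k)"
  unfolding delayed_diagonal_def by (cases "k = 0"; cases "k = 1"; simp; intro continuous_intros; simp)

lemma delayed_diagonal_path_in_branch_paths: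
  assumes "0 \<le> s" and "\<epsilon> \<le> 1"
  shows "delayed_diagonal_path \<epsilon> s \<in> branch_paths (std_cube 2) (zero_vertex 2) \<epsilon>"
proof -
  have "restrict (delayed_diagonal s) {0..\<epsilon>} \<in> natural_paths 2 \<epsilon>"
  proof (rule natural_pathsI)
    show "continuous_on {0..\<epsilon>} (\<lambda>t. delayed_diagonal s t k)" for k
      unfolding delayed_diagonal_def by (cases "k = 0"; cases "k = 1"; simp; intro continuous_intros; simp)
    show "delayed_diagonal s ` {0..\<epsilon>} \<subseteq> cube 2"
      using assms by (auto intro: delayed_diagonal_in_cube)
    show "delayed_diagonal s t' k \<le> delayed_diagonal s t k"
      if "0 \<le> t'" "t' \<le> t" "t \<le> \<epsilon>" "k < 2" for t' t k
      using that by (auto simp: delayed_diagonal_def min_def less_2_cases_iff)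
    show "(\<Sum>k<2. delayed_diagonal s t k) = t" for t
      by (simp add: delayed_diagonal_def numeral_2_eq_2 field_simps)
  qed
  moreover have "(2, [None, None]) \<in> init_cubes (std_cube 2) (zero_vertex 2)"
    by (simp add: init_cubes_def std_cube_def zero_vertex_def numeral_2_eq_2)
  moreover have "delayed_diagonal_path \<epsilon> s
      = restrict (cell_map (std_cube 2) 2 [None, None] \<circ> restrict (delayed_diagonal s) {0..\<epsilon>}) {0..\<epsilon>}"
    by (rule ext) (simp add: delayed_diagonal_path_def)
  ultimately show ?thesis
    unfolding branch_paths_def by blast
qed

lemma continuous_map_delayed_diagonal_path:
  assumes "0 \<le> \<epsilon>" and "\<epsilon> \<le> 1"
  shows "continuous_map (top_of_set {0..1}) (branch_space (std_cube 2) (zero_vertex 2) \<epsilon>)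
           (delayed_diagonal_path \<epsilon>)"
proof (rule continuous_map_into_branch_space)
  have "continuous_map (top_of_set ({0..1} \<times> {0..\<epsilon>})) (cube_top 2)
      (\<lambda>p. delayed_diagonal (fst p) (snd p))"
    using assms
    by (intro continuous_map_into_cube_top continuous_on_delayed_diagonal)
      (auto intro!: delayed_diagonal_in_cube)
  moreover have "[None, None] \<in> cells (std_cube 2) 2"
    by (simp add: std_cube_def)
  ultimately have "continuous_map (prod_topology (top_of_set {0..1}) (top_of_set {0..\<epsilon>}))
      (geom_real (std_cube 2)) (\<lambda>p. cell_map (std_cube 2) 2 [None, None] (delayed_diagonal (fst p) (snd p)))"
    using continuous_map_compose[OF _ continuous_map_cell_map] by (simp add: o_def)
  from continuous_map_compact_open_curry[OF this]
  show "continuous_map (top_of_set {0..1}) (compact_open (top_of_set {0..\<epsilon>}) (geom_real (std_cube 2)))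
      (delayed_diagonal_path \<epsilon>)"
    by (simp add: delayed_diagonal_path_def[abs_def])
  show "delayed_diagonal_path \<epsilon> ` {0..1} \<subseteq> branch_paths (std_cube 2) (zero_vertex 2) \<epsilon>"
    using assms(2) by (auto intro: delayed_diagonal_path_in_branch_paths)
qed

definition bottom_edge_path :: "real \<Rightarrow> real \<Rightarrow> (nat \<times> bool option list \<times> (nat \<Rightarrow> real)) set" where
  "bottom_edge_path \<epsilon> =
     restrict (\<lambda>t. cell_map (bdry_cube 2) 1 [None, Some False] (\<lambda>k. if k = 0 then t else 0)) {0..\<epsilon>}"

lemma bottom_edge_path_in_branch_paths:
  assumes "\<epsilon> \<le> 1"
  shows "bottom_edge_path \<epsilon> \<in> branch_paths (bdry_cube 2) (zero_vertex 2) \<epsilon>"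
proof -
  define edge :: "real \<Rightarrow> nat \<Rightarrow> real" where "edge t = (\<lambda>k. if k = 0 then t else 0)" for t
  have "restrict edge {0..\<epsilon>} \<in> natural_paths 1 \<epsilon>"
  proof (rule natural_pathsI)
    show "continuous_on {0..\<epsilon>} (\<lambda>t. edge t k)" for k
      unfolding edge_def by (cases "k = 0") simp_all
  qed (use assms in \<open>auto simp: edge_def cube_def\<close>)
  moreover have "(1, [None, Some False]) \<in> init_cubes (bdry_cube 2) (zero_vertex 2)"
    by (simp add: init_cubes_bdry_square)
  moreover have "bottom_edge_path \<epsilon>
      = restrict (cell_map (bdry_cube 2) 1 [None, Some False] \<circ> restrict edge {0..\<epsilon>}) {0..\<epsilon>}"
    by (rule ext) (simp add: bottom_edge_path_def edge_def)
  ultimately show ?thesis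
    unfolding branch_paths_def by blast
qed

lemma bdry_incl_bottom_edge_path:
  assumes "t \<in> {0..\<epsilon>}" and "\<epsilon> \<le> 1" and "t \<le> s"
  shows "bdry_incl_path 2 \<epsilon> (bottom_edge_path \<epsilon>) t = delayed_diagonal_path \<epsilon> s t"
proof -
  let ?y = "\<lambda>k. if k = 0 then t else 0 :: real"
  have "bdry_incl_path 2 \<epsilon> (bottom_edge_path \<epsilon>) t = cell_map (std_cube 2) 1 [None, Some False] ?y"
    using assms(1)
    by (simp add: bdry_incl_path_def bottom_edge_path_def cell_map_def real_map_bdry_cube_real_class)
  also have "\<dots> = cell_map (std_cube 2) 2 [None, None] ?y"
    using assms(1,2) by (intro cell_map_bottom_edge_eq_square) (auto simp: cube_def)
  also have "?y = delayed_diagonal s t"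
    using assms(3) by (auto simp: delayed_diagonal_def min_def)
  also have "cell_map (std_cube 2) 2 [None, None] (delayed_diagonal s t) = delayed_diagonal_path \<epsilon> s t"
    using assms(1) by (simp add: delayed_diagonal_path_def)
  finally show ?thesis .
qed

lemma delayed_diagonal_germ_in_image:
  assumes "0 < \<epsilon>" and "\<epsilon> \<le> 1" and "0 < s"
  shows "germ_rel (std_cube 2) (zero_vertex 2) \<epsilon> `` {delayed_diagonal_path \<epsilon> s}
    \<in> germ_map (bdry_cube 2) (std_cube 2) id (zero_vertex 2) \<epsilon> `
        (branch_paths (bdry_cube 2) (zero_vertex 2) \<epsilon> // germ_rel (bdry_cube 2) (zero_vertex 2) \<epsilon>)"
proof -
  let ?\<gamma> = "bottom_edge_path \<epsilon>"
  have \<gamma>: "?\<gamma> \<in> branch_paths (bdry_cube 2) (zero_vertex 2) \<epsilon>"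
    using assms(2) by (rule bottom_edge_path_in_branch_paths)
  have "\<forall>t\<in>{0..min s (\<epsilon> / 2)}. delayed_diagonal_path \<epsilon> s t = bdry_incl_path 2 \<epsilon> ?\<gamma> t"
    using assms by (auto simp: bdry_incl_bottom_edge_path)
  moreover have "bdry_incl_path 2 \<epsilon> ?\<gamma> \<in> branch_paths (std_cube 2) (zero_vertex 2) \<epsilon>"
    using \<gamma> by (rule bdry_incl_path_in_branch_paths)
  moreover have "delayed_diagonal_path \<epsilon> s \<in> branch_paths (std_cube 2) (zero_vertex 2) \<epsilon>"
    using assms by (simp add: delayed_diagonal_path_in_branch_paths)
  ultimately have "(delayed_diagonal_path \<epsilon> s, bdry_incl_path 2 \<epsilon> ?\<gamma>) \<in> germ_rel (std_cube 2) (zero_vertex 2) \<epsilon>"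
    unfolding germ_rel_iff using assms by (intro conjI exI[of _ "min s (\<epsilon> / 2)"]) auto
  then have "germ_rel (std_cube 2) (zero_vertex 2) \<epsilon> `` {delayed_diagonal_path \<epsilon> s}
      = germ_rel (std_cube 2) (zero_vertex 2) \<epsilon> `` {bdry_incl_path 2 \<epsilon> ?\<gamma>}"
    by (rule equiv_class_eq[OF equiv_germ_rel[OF assms(1)]])
  with \<gamma> show ?thesis
    unfolding germ_map_bdry_cube_image[OF assms(1)] image_iff by (intro bexI[of _ ?\<gamma>])
qed

lemma bdry_incl_path_ne_diagonal:
  assumes \<gamma>: "\<gamma> \<in> branch_paths (bdry_cube 2) (zero_vertex 2) \<epsilon>" and t: "0 < t" "t \<le> \<epsilon>"
  shows "delayed_diagonal_path \<epsilon> 0 t \<noteq> bdry_incl_path 2 \<epsilon> \<gamma> t"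
proof
  assume eq: "delayed_diagonal_path \<epsilon> 0 t = bdry_incl_path 2 \<epsilon> \<gamma> t"
  obtain n c \<phi> where "(n, c) \<in> init_cubes (bdry_cube 2) (zero_vertex 2)"
    and \<gamma>_eq: "\<gamma> = restrict (cell_map (bdry_cube 2) n c \<circ> \<phi>) {0..\<epsilon>}"
    using \<gamma> unfolding branch_paths_def by blast
  then have n: "n = 1" and c: "c = [None, Some False] \<or> c = [Some False, None]"
    by (simp_all only: init_cubes_bdry_square)
  have "real_class (std_cube 2) (2, [None, None], delayed_diagonal 0 t) = real_class (std_cube 2) (1, c, \<phi> t)"
    using eq t by (simp add: \<gamma>_eq n bdry_incl_path_def delayed_diagonal_path_def cell_map_def
        real_map_bdry_cube_real_class)
  then have coords: "std_cube_coord (2, [None, None], delayed_diagonal 0 t) = std_cube_coord (1, c, \<phi> t)"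
    by (rule real_class_std_cube_coord)
  have "std_cube_coord (1, c, \<phi> t) 0 * std_cube_coord (1, c, \<phi> t) 1 = 0"
    using c by (auto simp: std_cube_coord_def word_coord_def)
  moreover have "std_cube_coord (2, [None, None], delayed_diagonal 0 t) 0 = t / 2"
    "std_cube_coord (2, [None, None], delayed_diagonal 0 t) 1 = t / 2"
    using t by (simp_all add: std_cube_coord_def word_coord_def delayed_diagonal_def)
  ultimately show False
    using t(1) unfolding coords by simp
qed

lemma diagonal_germ_not_in_image:
  assumes "0 < \<epsilon>" and "\<epsilon> \<le> 1"
  shows "germ_rel (std_cube 2) (zero_vertex 2) \<epsilon> `` {delayed_diagonal_path \<epsilon> 0}
    \<notin> germ_map (bdry_cube 2) (std_cube 2) id (zero_vertex 2) \<epsilon> `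
        (branch_paths (bdry_cube 2) (zero_vertex 2) \<epsilon> // germ_rel (bdry_cube 2) (zero_vertex 2) \<epsilon>)"
proof
  assume "germ_rel (std_cube 2) (zero_vertex 2) \<epsilon> `` {delayed_diagonal_path \<epsilon> 0}
    \<in> germ_map (bdry_cube 2) (std_cube 2) id (zero_vertex 2) \<epsilon> `
        (branch_paths (bdry_cube 2) (zero_vertex 2) \<epsilon> // germ_rel (bdry_cube 2) (zero_vertex 2) \<epsilon>)"
  then obtain \<gamma> where \<gamma>: "\<gamma> \<in> branch_paths (bdry_cube 2) (zero_vertex 2) \<epsilon>"
    and eq: "germ_rel (std_cube 2) (zero_vertex 2) \<epsilon> `` {delayed_diagonal_path \<epsilon> 0}
      = germ_rel (std_cube 2) (zero_vertex 2) \<epsilon> `` {bdry_incl_path 2 \<epsilon> \<gamma>}"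
    unfolding germ_map_bdry_cube_image[OF assms(1)] by blast
  have "delayed_diagonal_path \<epsilon> 0 \<in> branch_paths (std_cube 2) (zero_vertex 2) \<epsilon>"
    using assms(2) by (simp add: delayed_diagonal_path_in_branch_paths)
  then have "(delayed_diagonal_path \<epsilon> 0, bdry_incl_path 2 \<epsilon> \<gamma>) \<in> germ_rel (std_cube 2) (zero_vertex 2) \<epsilon>"
    using eq_equiv_class_iff[OF equiv_germ_rel[OF assms(1)] _ bdry_incl_path_in_branch_paths[OF \<gamma>]]
      eq by simp
  then obtain t where t: "0 < t" "t < \<epsilon>"
    and agree: "\<forall>t'\<in>{0..t}. delayed_diagonal_path \<epsilon> 0 t' = bdry_incl_path 2 \<epsilon> \<gamma> t'"
    unfolding germ_rel_iff by blast
  have "t \<in> {0..t}" using t by simp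
  with agree have "delayed_diagonal_path \<epsilon> 0 t = bdry_incl_path 2 \<epsilon> \<gamma> t" by blast
  with bdry_incl_path_ne_diagonal[OF \<gamma> t(1) less_imp_le[OF t(2)]] show False by contradiction
qed

lemma continuous_map_closedin_at_left_endpoint:
  fixes g :: "real \<Rightarrow> 'a"
  assumes "continuous_map (top_of_set {0..1}) Y g" and "closedin Y A"
    and "\<And>s. 0 < s \<Longrightarrow> s \<le> 1 \<Longrightarrow> g s \<in> A"
  shows "g 0 \<in> A"
proof -
  have "closedin (top_of_set {0..1}) {s \<in> {0..1}. g s \<in> A}"
    using closedin_continuous_map_preimage[OF assms(1,2)] by simp
  then obtain C where C: "closed C" "{s \<in> {0..1}. g s \<in> A} = {0..1} \<inter> C"
    unfolding closedin_closed by blast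
  have "{0<..1} \<subseteq> C"
  proof
    fix s :: real assume "s \<in> {0<..1}"
    then have "s \<in> {s \<in> {0..1}. g s \<in> A}" using assms(3) by simp
    then show "s \<in> C" using C(2) by blast
  qed
  then have "closure {0<..1::real} \<subseteq> C" using C(1) by (rule closure_minimal)
  then have "(0::real) \<in> C" by (rule subsetD) simp
  then have "(0::real) \<in> {s \<in> {0..1}. g s \<in> A}" unfolding C(2) by simp
  then show ?thesis by simp
qed

theorem proposition4p4:
  fixes \<epsilon> :: real
  assumes "0 < \<epsilon>" and "\<epsilon> < 1"
  shows "\<not> closed_inclusion (germ_space (bdry_cube 2) (zero_vertex 2) \<epsilon>)
                            (germ_space (std_cube 2) (zero_vertex 2) \<epsilon>)
                            (germ_map (bdry_cube 2) (std_cube 2) id (zero_vertex 2) \<epsilon>)"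
proof
  let ?germ = "\<lambda>s. germ_rel (std_cube 2) (zero_vertex 2) \<epsilon> `` {delayed_diagonal_path \<epsilon> s}"
  let ?image = "germ_map (bdry_cube 2) (std_cube 2) id (zero_vertex 2) \<epsilon> `
        (branch_paths (bdry_cube 2) (zero_vertex 2) \<epsilon> // germ_rel (bdry_cube 2) (zero_vertex 2) \<epsilon>)"
  assume "closed_inclusion (germ_space (bdry_cube 2) (zero_vertex 2) \<epsilon>)
      (germ_space (std_cube 2) (zero_vertex 2) \<epsilon>) (germ_map (bdry_cube 2) (std_cube 2) id (zero_vertex 2) \<epsilon>)"
  then have closed: "closedin (germ_space (std_cube 2) (zero_vertex 2) \<epsilon>) ?image"
    unfolding closed_inclusion_def topspace_germ_space by (elim conjE)
  have \<epsilon>: "0 \<le> \<epsilon>" "\<epsilon> \<le> 1" using assms by simp_all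
  have continuous: "continuous_map (top_of_set {0..1}) (germ_space (std_cube 2) (zero_vertex 2) \<epsilon>) ?germ"
    using continuous_map_compose[OF continuous_map_delayed_diagonal_path[OF \<epsilon>] continuous_map_germ_class]
    by (simp only: o_def)
  have "?germ s \<in> ?image" if "0 < s" "s \<le> 1" for s
    using assms(1) \<epsilon>(2) that(1) by (rule delayed_diagonal_germ_in_image)
  with continuous closed have "?germ 0 \<in> ?image"
    by (rule continuous_map_closedin_at_left_endpoint)
  with diagonal_germ_not_in_image[OF assms(1) \<epsilon>(2)] show False ..
qed

end
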